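(* Let $G=(V,E)$ be a graph with a partition of its vertex set into sets $V_1,\dots,V_t$ ($t$ a positive integer), each $V_i$ being a set of pairwise false twins. Let $m_i=|V_i|$ for $1\le i\le t$. Let $\Gamma$ be a finite Abelian group of order $m$ with $\sum_{i=1}^t m_i=m-1$. If $\Gamma^*$ can be partitioned into pairwise disjoint sets $S_1,\dots,S_t$ with $|S_i|=m_i$ and $\sum_{s\in S_i}s=0$ for every $i$, then $G$ has a $\Gamma^*$-distance magic labeling.
   Context: $\Gamma^*=\Gamma\setminus\{0\}$. In a graph $G=(V,E)$, a set $M\subseteq V$ is a module if $N(x)\setminus M=N(y)\setminus M$ for all $x,y\in M$. Two vertices $x,y$ are twins if $\{x,y\}$ is a module; they are false twins if moreover $\{x,y\}\notin E$ and true twins if $\{x,y\}\in E$ (every vertex is considered a false and true twin of itself). A $\Gamma^*$-distance magic labeling of $G$ (with $|V|=|\Gamma|-1$) is a bijection $\ell\colon V\to\Gamma^*$ such that the weight $w(v)=\sum_{u\in N(v)}\ell(u)$ is the same element of $\Gamma$ for all $v\in V$. *)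

theory Defs
  imports Main
begin

definition simple_graph :: "'v set \<Rightarrow> ('v \<Rightarrow> 'v \<Rightarrow> bool) \<Rightarrow> bool" where
  "simple_graph V E \<longleftrightarrow> finite V \<and> (\<forall>x y. E x y \<longrightarrow> x \<in> V \<and> y \<in> V)
     \<and> (\<forall>x y. E x y \<longrightarrow> E y x) \<and> (\<forall>x. \<not> E x x)"

definition nbhd :: "'v set \<Rightarrow> ('v \<Rightarrow> 'v \<Rightarrow> bool) \<Rightarrow> 'v \<Rightarrow> 'v set" where
  "nbhd V E x = {y \<in> V. E x y}"

definition is_module :: "'v set \<Rightarrow> ('v \<Rightarrow> 'v \<Rightarrow> bool) \<Rightarrow> 'v set \<Rightarrow> bool" where
  "is_module V E M \<longleftrightarrow> M \<subseteq> V \<and> (\<forall>x\<in>M. \<forall>y\<in>M. nbhd V E x - M = nbhd V E y - M)"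

text \<open>False twins (every vertex is a false twin of itself).\<close>
definition false_twins :: "'v set \<Rightarrow> ('v \<Rightarrow> 'v \<Rightarrow> bool) \<Rightarrow> 'v \<Rightarrow> 'v \<Rightarrow> bool" where
  "false_twins V E x y \<longleftrightarrow> is_module V E {x, y} \<and> \<not> E x y"

definition distance_magic_labeling ::
  "'v set \<Rightarrow> ('v \<Rightarrow> 'v \<Rightarrow> bool) \<Rightarrow> ('v \<Rightarrow> 'g::{ab_group_add,finite}) \<Rightarrow> bool" where
  "distance_magic_labeling V E l \<longleftrightarrow> bij_betw l V (UNIV - {0}) \<and>
     (\<exists>w. \<forall>v\<in>V. (\<Sum>u\<in>nbhd V E v. l u) = w)"

end

theory Submission
  imports Defs "HOL-Library.Disjoint_Sets"
begin

text \<open>Label the $i$-th twin class bijectively by $S_i$. A neighbourhood never separates two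
  false twins, so it is a union of whole twin classes, and each class contributes
  $\sum_{s \in S_i} s = 0$ to the weight. Hence every vertex has weight $0$.\<close>

lemma false_twin_mem_nbhd:
  assumes "simple_graph V E" and "false_twins V E u u'" and "u \<in> nbhd V E v"
  shows "u' \<in> nbhd V E v"
proof -
  have "E v u" "v \<in> V" using assms(1,3) by (auto simp: nbhd_def simple_graph_def)
  then have "E u v" using assms(1) by (simp add: simple_graph_def)
  have module: "is_module V E {u, u'}" and "\<not> E u u'"
    using assms(2) by (simp_all add: false_twins_def)
  have "v \<noteq> u" "v \<noteq> u'"
    using assms(1) \<open>E u v\<close> \<open>\<not> E u u'\<close> by (auto simp: simple_graph_def)
  with \<open>E u v\<close> \<open>v \<in> V\<close> have "v \<in> nbhd V E u - {u, u'}" unfolding nbhd_def by blast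
  also have "nbhd V E u - {u, u'} = nbhd V E u' - {u, u'}"
    using module unfolding is_module_def by blast
  finally have "E u' v" unfolding nbhd_def by blast
  moreover have "u' \<in> V" using module unfolding is_module_def by blast
  ultimately show ?thesis using assms(1) unfolding nbhd_def simple_graph_def by blast
qed

lemma bij_betw_UN_disjoint_family:
  assumes "disjoint_family_on P I" and "disjoint_family_on S I"
    and "\<And>i. i \<in> I \<Longrightarrow> bij_betw (F i) (P i) (S i)"
  obtains l where "bij_betw l (\<Union>i\<in>I. P i) (\<Union>i\<in>I. S i)"
    and "\<And>i x. i \<in> I \<Longrightarrow> x \<in> P i \<Longrightarrow> l x = F i x"
proof
  define l where "l x = F (THE i. i \<in> I \<and> x \<in> P i) x" for x
  show l_eq: "l x = F i x" if "i \<in> I" "x \<in> P i" for i x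
  proof -
    have "(THE i. i \<in> I \<and> x \<in> P i) = i"
      using that assms(1) by (intro the_equality) (auto simp: disjoint_family_on_def)
    then show ?thesis by (simp add: l_def)
  qed
  have l_mem: "l x \<in> S i" if "i \<in> I" "x \<in> P i" for i x
    using that assms(3) l_eq by (metis bij_betwE)
  show "bij_betw l (\<Union>i\<in>I. P i) (\<Union>i\<in>I. S i)"
    unfolding bij_betw_def
  proof
    show "inj_on l (\<Union>i\<in>I. P i)"
    proof (rule inj_onI, elim UN_E)
      fix x y i j assume "l x = l y" "i \<in> I" "x \<in> P i" "j \<in> I" "y \<in> P j"
      moreover from this have "i = j"
        using l_mem assms(2) by (metis disjoint_family_onD disjoint_iff)
      ultimately show "x = y"
        using l_eq assms(3) by (metis bij_betw_imp_inj_on inj_onD)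
    qed
    have "l ` P i = S i" if "i \<in> I" for i
      using that l_eq assms(3) by (metis bij_betw_imp_surj_on image_cong)
    then show "l ` (\<Union>i\<in>I. P i) = (\<Union>i\<in>I. S i)"
      by (simp add: image_UN)
  qed
qed

lemma sum_eq_0_if_union_of_zero_sum_blocks:
  assumes "finite I" and "disjoint_family_on P I" and "\<And>i. i \<in> I \<Longrightarrow> finite (P i)"
    and "N \<subseteq> (\<Union>i\<in>I. P i)"
    and "\<And>i. i \<in> I \<Longrightarrow> P i \<inter> N \<noteq> {} \<Longrightarrow> P i \<subseteq> N"
    and "\<And>i. i \<in> I \<Longrightarrow> sum f (P i) = 0"
  shows "sum f N = 0"
proof -
  have "N = (\<Union>i\<in>I. P i \<inter> N)" using assms(4) by blast
  also have "sum f \<dots> = (\<Sum>i\<in>I. sum f (P i \<inter> N))"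
  proof (rule sum.UNION_disjoint_family)
    show "disjoint_family_on (\<lambda>i. P i \<inter> N) I"
      using assms(2) by (auto simp: disjoint_family_on_def)
  qed (use assms(1,3) in auto)
  also have "\<dots> = 0"
  proof (rule sum.neutral, intro ballI)
    fix i assume "i \<in> I"
    then have "P i \<inter> N = {} \<or> P i \<inter> N = P i" using assms(5) by blast
    then show "sum f (P i \<inter> N) = 0" using assms(6) \<open>i \<in> I\<close> by auto
  qed
  finally show ?thesis .
qed

theorem proposition4p7:
  fixes V :: "'v set" and E :: "'v \<Rightarrow> 'v \<Rightarrow> bool"
    and t :: nat and P :: "nat \<Rightarrow> 'v set" and S :: "nat \<Rightarrow> 'g::{ab_group_add,finite} set"
  assumes graph: "simple_graph V E"
    and t_pos: "t \<ge> 1"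
    and P_nonempty: "\<forall>i\<in>{1..t}. P i \<noteq> {}"
    and P_disj: "\<forall>i\<in>{1..t}. \<forall>j\<in>{1..t}. i \<noteq> j \<longrightarrow> P i \<inter> P j = {}"
    and P_cover: "(\<Union>i\<in>{1..t}. P i) = V"
    and P_twins: "\<forall>i\<in>{1..t}. \<forall>x\<in>P i. \<forall>y\<in>P i. false_twins V E x y"
    and card_sum: "(\<Sum>i\<in>{1..t}. card (P i)) = card (UNIV :: 'g set) - 1"
    and S_disj: "\<forall>i\<in>{1..t}. \<forall>j\<in>{1..t}. i \<noteq> j \<longrightarrow> S i \<inter> S j = {}"
    and S_cover: "(\<Union>i\<in>{1..t}. S i) = UNIV - {0}"
    and S_card: "\<forall>i\<in>{1..t}. card (S i) = card (P i)"
    and S_sum: "\<forall>i\<in>{1..t}. (\<Sum>s\<in>S i. s) = 0"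
  shows "\<exists>l :: 'v \<Rightarrow> 'g. distance_magic_labeling V E l"
proof -
  have P_family: "disjoint_family_on P {1..t}" and S_family: "disjoint_family_on S {1..t}"
    using P_disj S_disj by (simp_all add: disjoint_family_on_def)
  have P_finite: "finite (P i)" if "i \<in> {1..t}" for i
    using that graph P_cover by (metis UN_upper finite_subset simple_graph_def)
  have "\<forall>i\<in>{1..t}. \<exists>f. bij_betw f (P i) (S i)"
    using P_finite S_card by (metis finite finite_same_card_bij)
  then obtain F where F: "\<And>i. i \<in> {1..t} \<Longrightarrow> bij_betw (F i) (P i) (S i)" by metis
  obtain l where l_bij: "bij_betw l V (UNIV - {0})"
    and l_eq: "\<And>i x. i \<in> {1..t} \<Longrightarrow> x \<in> P i \<Longrightarrow> l x = F i x"
    using bij_betw_UN_disjoint_family[OF P_family S_family F] P_cover S_cover by metis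
  have class_sum: "sum l (P i) = 0" if i: "i \<in> {1..t}" for i
    using sum.reindex_bij_betw[OF F[OF i], of id] l_eq[OF i] S_sum i by simp
  have "sum l (nbhd V E v) = 0" for v
  proof (rule sum_eq_0_if_union_of_zero_sum_blocks[OF _ P_family P_finite _ _ class_sum])
    show "nbhd V E v \<subseteq> (\<Union>i\<in>{1..t}. P i)" using P_cover by (auto simp: nbhd_def)
    show "P i \<subseteq> nbhd V E v" if "i \<in> {1..t}" "P i \<inter> nbhd V E v \<noteq> {}" for i
      using that P_twins false_twin_mem_nbhd[OF graph] by blast
  qed simp_all
  with l_bij show ?thesis unfolding distance_magic_labeling_def by blast
qed

end
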